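(* Let $G=\{(x,R(x)) : x\in[0,1]\}$ be the graph of $R$. Then $$1\le\dim_H G\le\dim_B G=\dim_B\overline G=\log_2 3,$$ where $\dim_H$ and $\dim_B$ denote Hausdorff and box-counting dimension.
   Context: Define $\rho$ on binary words: for $b=b_1b_2\dots$, $\rho(b)$ is obtained by deleting every digit $b_n=0$ and replacing every $b_n=1$ by $0$ if $n$ is odd and by $1$ if $n$ is even. For $x\in(0,1]$ let $\beta(x)$ be the unique binary expansion of $x$ with infinitely many $1$'s. Define $R:[0,1]\to[0,1]$ by $R(0)=2/3$ and, for $x\in(0,1]$, $R(x)=\sum_{n\ge1}c_n2^{-n}$ where $c=\rho(\beta(x))$. *)

theory Defs
  imports "HOL-Analysis.Analysis" "HOL-Library.Infinite_Set"
begin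

text \<open>Binary digit sequences are indexed from 0: position k of the sequence is the
  digit b_(k+1) of the paper, so the paper's index n is k+1 (n odd iff k even).\<close>

definition binexp :: "real \<Rightarrow> nat \<Rightarrow> nat" where
  "binexp x = (THE b. (\<forall>k. b k \<in> {0, 1}) \<and> infinite {k. b k = 1} \<and>
                       x = (\<Sum>k. real (b k) / 2 ^ (k + 1)))"

text \<open>rho: delete the zeros; the m-th surviving 1 (at paper position n = p+1) becomes
  0 if n is odd and 1 if n is even.  Applied to words with infinitely many 1s.\<close>

definition rho :: "(nat \<Rightarrow> nat) \<Rightarrow> nat \<Rightarrow> nat" where
  "rho b m = (let p = enumerate {k. b k = 1} m in if even p then 0 else 1)"

definition R :: "real \<Rightarrow> real" where
  "R x = (if x = 0 then 2 / 3 else (\<Sum>m. real (rho (binexp x) m) / 2 ^ (m + 1)))"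

definition graphR :: "(real \<times> real) set" where
  "graphR = {(x, R x) | x. x \<in> {0..1}}"

definition hcost :: "real \<Rightarrow> 'a::metric_space set \<Rightarrow> real" where
  "hcost s U = (if U = {} then 0 else if s = 0 then 1 else diameter U powr s)"

definition hausdorff_pre :: "real \<Rightarrow> real \<Rightarrow> 'a::metric_space set \<Rightarrow> ennreal" where
  "hausdorff_pre s \<delta> E =
     (INF U \<in> {U :: nat \<Rightarrow> 'a set. E \<subseteq> (\<Union>i. U i) \<and>
                 (\<forall>i. bounded (U i) \<and> diameter (U i) \<le> \<delta>)}.
        (\<Sum>i. ennreal (hcost s (U i))))"

definition hausdorff_measure :: "real \<Rightarrow> 'a::metric_space set \<Rightarrow> ennreal" where
  "hausdorff_measure s E = (SUP \<delta> \<in> {0<..}. hausdorff_pre s \<delta> E)"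

definition hausdorff_dim :: "'a::metric_space set \<Rightarrow> real" where
  "hausdorff_dim E = Inf {s. s \<ge> 0 \<and> hausdorff_measure s E = 0}"

definition box_count :: "real \<Rightarrow> 'a::metric_space set \<Rightarrow> nat" where
  "box_count \<delta> E = Inf {card F | F. finite F \<and> E \<subseteq> \<Union>F \<and>
                        (\<forall>U\<in>F. bounded U \<and> diameter U \<le> \<delta>)}"

definition has_box_dim :: "'a::metric_space set \<Rightarrow> real \<Rightarrow> bool" where
  "has_box_dim E d \<longleftrightarrow>
     ((\<lambda>\<delta>. ln (real (box_count \<delta> E)) / - ln \<delta>) \<longlongrightarrow> d) (at_right 0)"

end

(*
  Write x = digit_val b, where b is the binary expansion of x with infinitely many ones, so
  that R x = digit_val (rho b).  On the cylinder of a binary word v of length n, x ranges over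
  an interval of length 2^-n, while R x is determined up to 2^-(count_ones v), because rho
  turns only the ones of b into digits.  Hence the graph of R is covered by the
  sum over v of 2^(n - count_ones v) + 1, that is 3^n + 2^n, squares of side 2^-n, which bounds
  the upper box dimension and the Hausdorff dimension by log 2 3.  Conversely, the digits of b
  after v can be chosen so that rho emits any prescribed word of length n - count_ones v; the
  resulting 3^n points of the graph are 2^-(n+1)-separated, which gives the matching lower
  bound for the box dimension, also for the closure.  Finally the graph projects onto [0, 1],
  so its Hausdorff dimension is at least 1.
*)
theory Submission
  imports Defs
begin

section \<open>Binary expansions\<close>

definition digit_val :: "(nat \<Rightarrow> nat) \<Rightarrow> real" where
  "digit_val b = (\<Sum>k. real (b k) / 2 ^ (k + 1))"

definition binary_seq :: "(nat \<Rightarrow> nat) \<Rightarrow> bool" where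
  "binary_seq b \<longleftrightarrow> (\<forall>k. b k \<in> {0, 1})"

definition drop_seq :: "nat \<Rightarrow> (nat \<Rightarrow> nat) \<Rightarrow> nat \<Rightarrow> nat" where
  "drop_seq n b = (\<lambda>k. b (k + n))"

lemma binary_seq_le_1: "binary_seq b \<Longrightarrow> b k \<le> 1"
  unfolding binary_seq_def by (metis insert_iff singletonD order.refl zero_le)

lemma half_powers_sums: "(\<lambda>k. (1::real) / 2 ^ (k + 1)) sums 1"
  using power_half_series by (simp add: power_divide)

lemma summable_digit_val: "binary_seq b \<Longrightarrow> summable (\<lambda>k. real (b k) / 2 ^ (k + 1))"
proof (rule summable_comparison_test[OF _ sums_summable[OF half_powers_sums]])
  assume "binary_seq b"
  then have "real (b k) / 2 ^ (k + 1) \<le> 1 / 2 ^ (k + 1)" for k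
    by (intro divide_right_mono) (auto dest: binary_seq_le_1)
  then show "\<exists>N. \<forall>k\<ge>N. norm (real (b k) / 2 ^ (k + 1)) \<le> 1 / 2 ^ (k + 1)" by auto
qed

lemma digit_val_nonneg: "binary_seq b \<Longrightarrow> 0 \<le> digit_val b"
  unfolding digit_val_def by (intro suminf_nonneg summable_digit_val) auto

lemma digit_val_le_1: assumes "binary_seq b" shows "digit_val b \<le> 1"
proof -
  have "digit_val b \<le> (\<Sum>k. (1::real) / 2 ^ (k + 1))"
    unfolding digit_val_def using binary_seq_le_1[OF assms]
    by (intro suminf_le summable_digit_val assms sums_summable[OF half_powers_sums]
        divide_right_mono) auto
  then show ?thesis using sums_unique[OF half_powers_sums] by simp
qed

lemma digit_val_pos: assumes "binary_seq b" "infinite {k. b k = 1}" shows "0 < digit_val b"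
proof -
  obtain i where "b i = 1" using assms(2) not_finite_existsD by auto
  then show ?thesis unfolding digit_val_def
    by (intro suminf_pos2[where i=i] summable_digit_val assms) auto
qed

lemma binary_seq_drop_seq: "binary_seq b \<Longrightarrow> binary_seq (drop_seq n b)"
  unfolding binary_seq_def drop_seq_def by auto

lemma infinite_ones_drop_seq:
  assumes "infinite {k. b k = 1}" shows "infinite {k. drop_seq n b k = 1}"
proof
  assume "finite {k. drop_seq n b k = 1}"
  then have "finite ({..<n} \<union> (\<lambda>k. k + n) ` {k. drop_seq n b k = 1})" by simp
  moreover have "{k. b k = 1} \<subseteq> {..<n} \<union> (\<lambda>k. k + n) ` {k. drop_seq n b k = 1}"
    unfolding drop_seq_def by (auto simp: image_iff) (metis le_add_diff_inverse2 not_less)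
  ultimately show False using assms finite_subset by blast
qed

lemma digit_val_split: assumes "binary_seq b"
  shows "digit_val b = (\<Sum>k<n. real (b k) / 2 ^ (k + 1)) + digit_val (drop_seq n b) / 2 ^ n"
proof -
  have "digit_val b = (\<Sum>k. real (b (k + n)) / 2 ^ (k + n + 1)) + (\<Sum>k<n. real (b k) / 2 ^ (k + 1))"
    unfolding digit_val_def using suminf_split_initial_segment[OF summable_digit_val[OF assms], of n]
    by simp
  also have "(\<lambda>k. real (b (k + n)) / 2 ^ (k + n + 1)) =
             (\<lambda>k. (real (drop_seq n b k) / 2 ^ (k + 1)) / 2 ^ n)"
    by (auto simp: drop_seq_def power_add)
  also have "(\<Sum>k. (real (drop_seq n b k) / 2 ^ (k + 1)) / 2 ^ n) = digit_val (drop_seq n b) / 2 ^ n"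
    unfolding digit_val_def
    by (rule suminf_divide[OF summable_digit_val[OF binary_seq_drop_seq[OF assms]]])
  finally show ?thesis by simp
qed

lemma digit_val_less:
  assumes "binary_seq b" "binary_seq b'" "infinite {k. b' k = 1}"
    and agree: "\<forall>k<n. b k = b' k" and "b n = 0" "b' n = 1"
  shows "digit_val b < digit_val b'"
proof -
  let ?p = "\<Sum>k<Suc n. real (b k) / 2 ^ (k + 1)"
  have prefix: "?p + 1 / 2 ^ Suc n = (\<Sum>k<Suc n. real (b' k) / 2 ^ (k + 1))"
    using agree assms(5,6) by simp
  have "digit_val b = ?p + digit_val (drop_seq (Suc n) b) / 2 ^ Suc n"
    using digit_val_split[OF assms(1)] .
  also have "\<dots> \<le> ?p + 1 / 2 ^ Suc n"
    using digit_val_le_1[OF binary_seq_drop_seq[OF assms(1)], of "Suc n"]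
    by (simp add: divide_right_mono)
  also have "\<dots> < ?p + 1 / 2 ^ Suc n + digit_val (drop_seq (Suc n) b') / 2 ^ Suc n"
    using digit_val_pos[OF binary_seq_drop_seq[OF assms(2)] infinite_ones_drop_seq[OF assms(3)]]
    by simp
  also have "\<dots> = digit_val b'" using digit_val_split[OF assms(2), of "Suc n"] prefix by simp
  finally show ?thesis .
qed

lemma digit_val_inj:
  assumes "binary_seq b" "binary_seq b'" "infinite {k. b k = 1}" "infinite {k. b' k = 1}"
    and "digit_val b = digit_val b'"
  shows "b = b'"
proof (rule ccontr)
  assume "b \<noteq> b'"
  then have ex: "\<exists>k. b k \<noteq> b' k" by auto
  define n where "n = (LEAST k. b k \<noteq> b' k)"
  have "b n \<noteq> b' n" unfolding n_def by (rule LeastI_ex[OF ex])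
  moreover have "b n \<in> {0, 1}" "b' n \<in> {0, 1}" using assms(1,2) unfolding binary_seq_def by auto
  ultimately consider "b n = 0" "b' n = 1" | "b' n = 0" "b n = 1" by auto
  then show False
  proof cases
    case 1
    have "\<forall>k<n. b k = b' k" unfolding n_def using not_less_Least by blast
    with 1 show False using digit_val_less[OF assms(1,2,4)] assms(5) by simp
  next
    case 2
    have "\<forall>k<n. b' k = b k" unfolding n_def using not_less_Least by fastforce
    with 2 show False using digit_val_less[OF assms(2,1,3)] assms(5) by simp
  qed
qed

text \<open>Approximating \<open>2^k x\<close> strictly from below is what produces the expansion with
  infinitely many ones.\<close>

definition approx_below :: "real \<Rightarrow> nat \<Rightarrow> int" where
  "approx_below x k = \<lceil>2 ^ k * x\<rceil> - 1"

lemma approx_below_bounds: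
  fixes x :: real
  shows "approx_below x k < 2 ^ k * x" "2 ^ k * x \<le> approx_below x k + 1"
  unfolding approx_below_def by linarith+

lemma approx_below_Suc: "approx_below x (Suc k) - 2 * approx_below (x::real) k \<in> {0, 1}"
proof -
  have "real_of_int (2 * approx_below x k) < approx_below x (Suc k) + 1"
       "real_of_int (approx_below x (Suc k)) < 2 * approx_below x k + 2"
    using approx_below_bounds[where x=x and k=k] approx_below_bounds[where x=x and k="Suc k"] by auto
  then show ?thesis by simp linarith
qed

lemma approx_below_tendsto: "(\<lambda>k. approx_below x k / 2 ^ k) \<longlonglongrightarrow> (x::real)"
proof (rule tendsto_sandwich[where f="\<lambda>k. x - (1/2) ^ k" and h="\<lambda>k. x"])
  have "x - (1/2) ^ k \<le> approx_below x k / 2 ^ k" for k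
  proof -
    have "x \<le> (approx_below x k + 1) / 2 ^ k"
      using approx_below_bounds(2)[where x=x and k=k] by (simp add: field_simps)
    then show ?thesis by (simp add: power_divide add_divide_distrib)
  qed
  then show "\<forall>\<^sub>F k in sequentially. x - (1/2) ^ k \<le> approx_below x k / 2 ^ k" by simp
  show "\<forall>\<^sub>F k in sequentially. approx_below x k / 2 ^ k \<le> x"
    using approx_below_bounds(1) by (auto simp: field_simps less_imp_le)
  show "(\<lambda>k. x - (1/2) ^ k) \<longlonglongrightarrow> x"
    using tendsto_diff[OF tendsto_const LIMSEQ_power_zero[of "1/2::real"]] by simp
qed simp

lemma ex_binary_seq_digit_val:
  assumes "0 < x" "x \<le> (1::real)"
  shows "\<exists>b. binary_seq b \<and> infinite {k. b k = 1} \<and> digit_val b = x"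
proof -
  let ?q = "approx_below x"
  define b where "b k = nat (?q (Suc k) - 2 * ?q k)" for k
  have b_eq: "real (b k) = ?q (Suc k) - 2 * ?q k" for k
    using approx_below_Suc[of x k] unfolding b_def by auto
  have binary: "binary_seq b"
    unfolding binary_seq_def b_def using approx_below_Suc[of x] by (auto simp: nat_eq_iff)
  have partial_sums: "(\<Sum>k<n. real (b k) / 2 ^ (k + 1)) = ?q n / 2 ^ n" for n
  proof (induction n)
    case 0
    then show ?case using assms ceiling_unique[of 1 x] by (simp add: approx_below_def)
  next
    case (Suc n)
    then show ?case by (simp add: b_eq diff_divide_distrib)
  qed
  then have "(\<lambda>k. real (b k) / 2 ^ (k + 1)) sums x"
    using approx_below_tendsto[of x] by (simp add: sums_def)
  then have val: "digit_val b = x" unfolding digit_val_def using sums_unique by metis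
  have "infinite {k. b k = 1}"
  proof
    assume "finite {k. b k = 1}"
    then obtain K where K: "\<forall>k\<in>{k. b k = 1}. k < K" using finite_nat_set_iff_bounded by blast
    have zero: "b (K + i) = 0" for i
    proof -
      have "b (K + i) \<noteq> 1" using K by force
      moreover have "b (K + i) \<in> {0, 1}" using binary unfolding binary_seq_def by blast
      ultimately show ?thesis by blast
    qed
    have tail: "(\<Sum>k<K + i. real (b k) / 2 ^ (k + 1)) = (\<Sum>k<K. real (b k) / 2 ^ (k + 1))"
      for i by (induction i) (simp_all add: zero)
    have "?q (K + i) / 2 ^ (K + i) = ?q K / 2 ^ K" for i
      using partial_sums tail by metis
    moreover have "(\<lambda>i. ?q (i + K) / 2 ^ (i + K)) \<longlonglongrightarrow> x"
      using LIMSEQ_ignore_initial_segment[OF approx_below_tendsto] .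
    ultimately have "?q K / 2 ^ K = x" by (simp add: add.commute LIMSEQ_const_iff)
    then show False using approx_below_bounds(1)[where x=x and k=K] by (simp add: field_simps)
  qed
  then show ?thesis using binary val by blast
qed

lemma binexp_digit_val:
  assumes "binary_seq b" "infinite {k. b k = 1}" shows "binexp (digit_val b) = b"
  unfolding binexp_def
proof (rule the_equality)
  fix b' assume "(\<forall>k. b' k \<in> {0, 1}) \<and> infinite {k. b' k = 1} \<and>
                 digit_val b = (\<Sum>k. real (b' k) / 2 ^ (k + 1))"
  then show "b' = b" using digit_val_inj[of b' b] assms unfolding binary_seq_def digit_val_def by auto
qed (use assms in \<open>auto simp: binary_seq_def digit_val_def\<close>)

lemma R_digit_val:
  assumes "binary_seq b" "infinite {k. b k = 1}" shows "R (digit_val b) = digit_val (rho b)"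
  using digit_val_pos[OF assms] binexp_digit_val[OF assms] unfolding R_def digit_val_def by simp

section \<open>Finite binary words\<close>

definition prepend_seq :: "nat list \<Rightarrow> (nat \<Rightarrow> nat) \<Rightarrow> nat \<Rightarrow> nat" where
  "prepend_seq v t = (\<lambda>k. if k < length v then v ! k else t (k - length v))"

definition word_val :: "nat list \<Rightarrow> real" where
  "word_val v = (\<Sum>k<length v. real (v ! k) / 2 ^ (k + 1))"

definition bin_words :: "nat \<Rightarrow> nat list set" where
  "bin_words n = {xs. set xs \<subseteq> {0, 1} \<and> length xs = n}"

definition count_ones :: "nat list \<Rightarrow> nat" where
  "count_ones v = length (filter (\<lambda>d. d = 1) v)"

lemma binary_seq_prepend_seq:
  "set v \<subseteq> {0, 1} \<Longrightarrow> binary_seq t \<Longrightarrow> binary_seq (prepend_seq v t)"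
  unfolding binary_seq_def prepend_seq_def by (auto dest: nth_mem)

lemma infinite_ones_prepend_seq:
  assumes "infinite {k. t k = 1}" shows "infinite {k. prepend_seq v t k = 1}"
proof -
  have "infinite ((\<lambda>k. k + length v) ` {k. t k = 1})"
  proof
    assume "finite ((\<lambda>k. k + length v) ` {k. t k = 1})"
    then have "finite {k. t k = 1}" by (rule finite_imageD) (simp add: inj_on_def)
    then show False using assms by simp
  qed
  moreover have "(\<lambda>k. k + length v) ` {k. t k = 1} \<subseteq> {k. prepend_seq v t k = 1}"
    unfolding prepend_seq_def by auto
  ultimately show ?thesis using finite_subset by blast
qed

lemma drop_seq_prepend_seq: "drop_seq (length v) (prepend_seq v t) = t"
  unfolding drop_seq_def prepend_seq_def by auto

lemma digit_val_prepend_seq: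
  assumes "set v \<subseteq> {0, 1}" "binary_seq t"
  shows "digit_val (prepend_seq v t) = word_val v + digit_val t / 2 ^ length v"
proof -
  have "(\<Sum>k<length v. real (prepend_seq v t k) / 2 ^ (k + 1)) = word_val v"
    unfolding word_val_def prepend_seq_def by simp
  then show ?thesis
    using digit_val_split[OF binary_seq_prepend_seq[OF assms], of "length v"]
    by (simp add: drop_seq_prepend_seq)
qed

lemma prepend_seq_take_drop: "prepend_seq (map b [0..<n]) (drop_seq n b) = b"
  unfolding prepend_seq_def drop_seq_def by auto

lemma word_val_nonneg: "0 \<le> word_val v" unfolding word_val_def by (auto intro!: sum_nonneg)

lemma word_val_Cons: "word_val (a # u) = (real a + word_val u) / 2"
proof -
  have "word_val (a # u) = real a / 2 ^ (0 + 1) + (\<Sum>k<length u. real ((a # u) ! Suc k) / 2 ^ (Suc k + 1))"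
    unfolding word_val_def length_Cons sum.lessThan_Suc_shift by simp
  also have "\<dots> = real a / 2 + (\<Sum>k<length u. real (u ! k) / 2 ^ (k + 2))" by simp
  also have "(\<Sum>k<length u. real (u ! k) / 2 ^ (k + 2)) = word_val u / 2"
    unfolding word_val_def sum_divide_distrib by (intro sum.cong) (auto simp: field_simps)
  finally show ?thesis by simp
qed

lemma word_val_le: "set u \<subseteq> {0, 1} \<Longrightarrow> word_val u \<le> 1 - 1 / 2 ^ length u"
proof (induction u)
  case Nil then show ?case by (simp add: word_val_def)
next
  case (Cons a u)
  then have a1: "real a \<le> 1" and f1: "word_val u \<le> 1 - 1 / 2 ^ length u" by auto
  have "word_val (a # u) = (real a + word_val u) / 2" by (rule word_val_Cons)
  also have "\<dots> \<le> (1 + (1 - 1 / 2 ^ length u)) / 2" using a1 f1 by (intro divide_right_mono) auto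
  also have "\<dots> = 1 - 1 / 2 ^ length (a # u)" by (simp add: field_simps)
  finally show ?case .
qed

lemma word_val_dist_ge:
  "set u \<subseteq> {0, 1} \<Longrightarrow> set u' \<subseteq> {0, 1} \<Longrightarrow> length u = length u' \<Longrightarrow> u \<noteq> u'
    \<Longrightarrow> 1 / 2 ^ length u \<le> \<bar>word_val u - word_val u'\<bar>"
proof (induction u arbitrary: u')
  case (Cons a u)
  then obtain a' w where u': "u' = a' # w" by (cases u') auto
  have ab: "a \<in> {0, 1}" "a' \<in> {0, 1}" "set u \<subseteq> {0, 1}" "set w \<subseteq> {0, 1}" "length u = length w"
    using Cons.prems u' by auto
  show ?case
  proof (cases "a = a'")
    case True
    then have "u \<noteq> w" using Cons.prems u' by auto
    then have "1 / 2 ^ length u \<le> \<bar>word_val u - word_val w\<bar>" using Cons.IH ab by auto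
    moreover have "word_val (a # u) - word_val u' = (word_val u - word_val w) / 2"
      using True u' by (simp add: word_val_Cons add_divide_distrib)
    ultimately show ?thesis by simp
  next
    case False
    then have "\<bar>real a - real a'\<bar> = 1" using ab by auto
    moreover have "0 \<le> word_val u" "0 \<le> word_val w"
      "word_val u \<le> 1 - 1 / 2 ^ length u" "word_val w \<le> 1 - 1 / 2 ^ length u"
      using word_val_nonneg word_val_le[OF ab(3)] word_val_le[OF ab(4)] ab(5) by auto
    moreover have "word_val (a # u) - word_val u' = (real a - real a' + word_val u - word_val w) / 2"
      using u' by (simp add: word_val_Cons diff_divide_distrib add_divide_distrib)
    ultimately show ?thesis by (simp add: abs_if split: if_splits)
  qed
qed simp

section \<open>Enumerating infinite sets of naturals\<close>

lemma card_less_enumerate: assumes "infinite (S::nat set)" shows "card {x\<in>S. x < enumerate S m} = m"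
proof -
  have "{x\<in>S. x < enumerate S m} = enumerate S ` {..<m}"
  proof
    show "{x \<in> S. x < enumerate S m} \<subseteq> enumerate S ` {..<m}"
    proof
      fix x assume x: "x \<in> {x \<in> S. x < enumerate S m}"
      then have "x \<in> range (enumerate S)" using range_enumerate[OF assms] by simp
      then obtain i where i: "x = enumerate S i" by blast
      then have "i < m" using x enumerate_mono_iff[OF assms] by simp
      then show "x \<in> enumerate S ` {..<m}" using i by simp
    qed
    show "enumerate S ` {..<m} \<subseteq> {x \<in> S. x < enumerate S m}"
    proof
      fix y assume "y \<in> enumerate S ` {..<m}"
      then obtain i where i: "i < m" "y = enumerate S i" by blast
      have "y \<in> S" using i enumerate_in_set[OF assms] by simp
      moreover have "y < enumerate S m" using i enumerate_mono[OF i(1) assms] by simp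
      ultimately show "y \<in> {x \<in> S. x < enumerate S m}" by simp
    qed
  qed
  moreover have "inj_on (enumerate S) {..<m}" using inj_enumerate[OF assms] by (rule inj_on_subset) simp
  ultimately show ?thesis using card_image by (metis card_lessThan)
qed

lemma enumerate_card_less: assumes "infinite (S::nat set)" "s \<in> S" shows "enumerate S (card {x\<in>S. x < s}) = s"
proof -
  obtain i where i: "enumerate S i = s" using enumerate_Ex[OF assms] by blast
  have "card {x\<in>S. x < enumerate S i} = i" by (rule card_less_enumerate[OF assms(1)])
  then show ?thesis using i by simp
qed

lemma enumerate_eq_if_initial_eq:
  fixes S S' :: "nat set"
  assumes "infinite S" "infinite S'" "S \<inter> {..<n} = S' \<inter> {..<n}" "m < card (S \<inter> {..<n})"
  shows "enumerate S m = enumerate S' m"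
proof -
  define s where "s = enumerate S m"
  have card_s: "card {x\<in>S. x < s} = m" unfolding s_def by (rule card_less_enumerate[OF assms(1)])
  have "s < n"
  proof (rule ccontr)
    assume "\<not> s < n"
    then have "S \<inter> {..<n} \<subseteq> {x\<in>S. x < s}" by auto
    then have "card (S \<inter> {..<n}) \<le> card {x\<in>S. x < s}" by (intro card_mono) auto
    then show False using card_s assms(4) by simp
  qed
  have "s \<in> S" unfolding s_def by (rule enumerate_in_set[OF assms(1)])
  then have "s \<in> S \<inter> {..<n}" using \<open>s < n\<close> by simp
  then have "s \<in> S'" using assms(3) by simp
  have "{x\<in>S'. x < s} = S' \<inter> {..<n} \<inter> {..<s}" using \<open>s < n\<close> by auto
  also have "\<dots> = S \<inter> {..<n} \<inter> {..<s}" using assms(3) by simp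
  also have "\<dots> = {x\<in>S. x < s}" using \<open>s < n\<close> by auto
  finally have "enumerate S' m = s" using enumerate_card_less[OF assms(2) \<open>s \<in> S'\<close>] card_s by simp
  then show ?thesis unfolding s_def by simp
qed

section \<open>The map \<open>R\<close> on a cylinder\<close>

lemma binary_seq_rho: "binary_seq (rho b)" unfolding binary_seq_def rho_def by (auto simp: Let_def)

lemma count_ones_eq_card: "count_ones v = card {k. k < length v \<and> v ! k = 1}"
  unfolding count_ones_def by (rule length_filter_conv_card)

lemma ones_prepend_seq_below:
  "{k. prepend_seq v t k = 1} \<inter> {..<length v} = {k. k < length v \<and> v ! k = 1}"
  unfolding prepend_seq_def by auto

lemma count_ones_le_length: "count_ones v \<le> length v" unfolding count_ones_def by simp

lemma rho_prepend_seq_initial: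
  assumes "infinite {k. t k = 1}" "infinite {k. t' k = 1}" "m < count_ones v"
  shows "rho (prepend_seq v t) m = rho (prepend_seq v t') m"
proof -
  have initial: "{k. prepend_seq v t k = 1} \<inter> {..<length v} = {k. prepend_seq v t' k = 1} \<inter> {..<length v}"
    by (simp only: ones_prepend_seq_below)
  have "m < card ({k. prepend_seq v t k = 1} \<inter> {..<length v})"
    using assms(3) unfolding ones_prepend_seq_below count_ones_eq_card .
  then have "enumerate {k. prepend_seq v t k = 1} m = enumerate {k. prepend_seq v t' k = 1} m"
    by (rule enumerate_eq_if_initial_eq[OF infinite_ones_prepend_seq[OF assms(1)]
        infinite_ones_prepend_seq[OF assms(2)] initial])
  then show ?thesis unfolding rho_def by simp
qed

text \<open>By \<open>rho_prepend_seq_initial\<close> the first \<open>count_ones v\<close> digits of \<open>rho\<close> do not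
  depend on how \<open>v\<close> is continued; the continuation by ones is an arbitrary choice.\<close>

definition rho_prefix_val :: "nat list \<Rightarrow> real" where
  "rho_prefix_val v = (\<Sum>m<count_ones v. real (rho (prepend_seq v (\<lambda>_. 1)) m) / 2 ^ (m + 1))"

lemma digit_val_rho_prepend_seq:
  assumes "infinite {k. t k = 1}"
  shows "digit_val (rho (prepend_seq v t)) = rho_prefix_val v +
           digit_val (drop_seq (count_ones v) (rho (prepend_seq v t))) / 2 ^ count_ones v"
proof -
  have "(\<Sum>m<count_ones v. real (rho (prepend_seq v t) m) / 2 ^ (m + 1)) = rho_prefix_val v"
    unfolding rho_prefix_val_def
    by (intro sum.cong refl) (simp add: rho_prepend_seq_initial[OF assms, of "\<lambda>_. 1"])
  then show ?thesis using digit_val_split[OF binary_seq_rho] by metis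
qed

section \<open>Witness sequences\<close>

text \<open>The witness for a prefix \<open>v\<close> and a target word \<open>e\<close> consists of \<open>v\<close>, a spacer \<open>0\<close>
  (which keeps the \<open>x\<close>-coordinates of witnesses with different prefixes apart) and then
  exactly one \<open>1\<close> in each block \<open>{2i, 2i+1}\<close>, at the position whose parity makes \<open>rho\<close>
  emit the digit \<open>e ! i\<close> (and \<open>0\<close> once \<open>e\<close> is exhausted).\<close>

definition parity_bit :: "nat \<Rightarrow> nat list \<Rightarrow> nat \<Rightarrow> nat" where
  "parity_bit n e i = (prepend_seq e (\<lambda>_. 0) i + n + 1) mod 2"

definition parity_code :: "nat \<Rightarrow> nat list \<Rightarrow> nat \<Rightarrow> nat" where
  "parity_code n e = (\<lambda>p. if p mod 2 = parity_bit n e (p div 2) then 1 else 0)"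

definition witness_seq :: "nat list \<Rightarrow> nat list \<Rightarrow> nat \<Rightarrow> nat" where
  "witness_seq v e = prepend_seq v (prepend_seq [0] (parity_code (length v) e))"

definition code_pos :: "nat \<Rightarrow> nat list \<Rightarrow> nat \<Rightarrow> nat" where
  "code_pos n e i = n + 1 + (2 * i + parity_bit n e i)"

lemma parity_bit_less_2: "parity_bit n e i < 2" unfolding parity_bit_def by simp

lemma parity_code_one: "parity_code n e (2 * i + parity_bit n e i) = 1"
  unfolding parity_code_def using parity_bit_less_2[of n e i] by simp

lemma binary_seq_parity_code: "binary_seq (parity_code n e)"
  unfolding binary_seq_def parity_code_def by auto

lemma infinite_ones_parity_code: "infinite {k. parity_code n e k = 1}"
  unfolding infinite_nat_iff_unbounded
proof
  fix m
  have "m < 2 * Suc m + parity_bit n e (Suc m)" by simp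
  then show "\<exists>k>m. k \<in> {k. parity_code n e k = 1}" using parity_code_one by blast
qed

lemma binary_seq_witness_seq: "set v \<subseteq> {0, 1} \<Longrightarrow> binary_seq (witness_seq v e)"
  unfolding witness_seq_def by (intro binary_seq_prepend_seq binary_seq_parity_code) auto

lemma infinite_ones_witness_seq: "infinite {k. witness_seq v e k = 1}"
  unfolding witness_seq_def by (intro infinite_ones_prepend_seq infinite_ones_parity_code)

lemma digit_val_witness_seq:
  assumes "set v \<subseteq> {0, 1}"
  shows "word_val v \<le> digit_val (witness_seq v e)"
    and "digit_val (witness_seq v e) \<le> word_val v + 1 / 2 ^ (length v + 1)"
proof -
  let ?t = "parity_code (length v) e"
  have "binary_seq (prepend_seq [0] ?t)" by (intro binary_seq_prepend_seq binary_seq_parity_code) auto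
  then have "digit_val (witness_seq v e) = word_val v + digit_val (prepend_seq [0] ?t) / 2 ^ length v"
    unfolding witness_seq_def using digit_val_prepend_seq[OF assms] by blast
  moreover have "digit_val (prepend_seq [0] ?t) = digit_val ?t / 2"
    using digit_val_prepend_seq[of "[0]" ?t] binary_seq_parity_code by (simp add: word_val_def)
  moreover have "0 \<le> digit_val ?t" "digit_val ?t \<le> 1"
    using digit_val_nonneg digit_val_le_1 binary_seq_parity_code by auto
  ultimately show "word_val v \<le> digit_val (witness_seq v e)"
    and "digit_val (witness_seq v e) \<le> word_val v + 1 / 2 ^ (length v + 1)"
    by (auto simp: divide_right_mono)
qed

lemma witness_seq_eq:
  "witness_seq v e k = (if k < length v then v ! k else if k = length v then 0
                        else parity_code (length v) e (k - length v - 1))"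
  unfolding witness_seq_def prepend_seq_def by auto

lemma witness_seq_code_pos: "witness_seq v e (code_pos (length v) e i) = 1"
  using parity_code_one[of "length v" e i] by (simp add: witness_seq_eq code_pos_def)

lemma strict_mono_code_pos: "strict_mono (code_pos n e)"
proof (rule strict_monoI_Suc)
  fix i show "code_pos n e i < code_pos n e (Suc i)"
    using parity_bit_less_2[of n e i] by (simp add: code_pos_def)
qed

lemma ones_witness_seq_below_code_pos:
  "{k. witness_seq v e k = 1 \<and> k < code_pos (length v) e i} =
     {k. k < length v \<and> v ! k = 1} \<union> code_pos (length v) e ` {..<i}"
proof (intro set_eqI iffI)
  fix k assume k: "k \<in> {k. witness_seq v e k = 1 \<and> k < code_pos (length v) e i}"
  show "k \<in> {k. k < length v \<and> v ! k = 1} \<union> code_pos (length v) e ` {..<i}"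
  proof (cases "k < length v")
    case False
    define p where "p = k - length v - 1"
    have "k \<noteq> length v" using k by (auto simp: witness_seq_eq)
    then have k_eq: "k = length v + 1 + p" using False unfolding p_def by linarith
    have "parity_code (length v) e p = 1" using k k_eq by (simp add: witness_seq_eq)
    then have "p mod 2 = parity_bit (length v) e (p div 2)"
      unfolding parity_code_def by (auto split: if_splits)
    then have "p = 2 * (p div 2) + parity_bit (length v) e (p div 2)" by presburger
    then have code: "k = code_pos (length v) e (p div 2)" unfolding code_pos_def k_eq by presburger
    then have "p div 2 < i" using k strict_mono_less[OF strict_mono_code_pos] by auto
    then show ?thesis using code by auto
  qed (use k in \<open>auto simp: witness_seq_eq\<close>)
next
  fix k assume "k \<in> {k. k < length v \<and> v ! k = 1} \<union> code_pos (length v) e ` {..<i}"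
  then consider "k < length v" "v ! k = 1" | j where "j < i" "k = code_pos (length v) e j" by blast
  then show "k \<in> {k. witness_seq v e k = 1 \<and> k < code_pos (length v) e i}"
  proof cases
    case 1
    then show ?thesis by (simp add: witness_seq_eq code_pos_def)
  next
    case 2
    then show ?thesis using witness_seq_code_pos strict_mono_less[OF strict_mono_code_pos] by simp
  qed
qed

lemma even_code_pos:
  assumes "set e \<subseteq> {0, 1}"
  shows "even (code_pos n e i) \<longleftrightarrow> prepend_seq e (\<lambda>_. 0) i = 0"
proof -
  have "prepend_seq e (\<lambda>_. 0) i \<le> 1"
    using assms unfolding prepend_seq_def by (auto dest: nth_mem)
  moreover have "even (n + 1 + (2 * i + (d + n + 1) mod 2)) \<longleftrightarrow> d = 0" if "d \<le> 1" for d :: nat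
    using that by presburger
  ultimately show ?thesis unfolding code_pos_def parity_bit_def by blast
qed

lemma rho_witness_seq:
  assumes "set e \<subseteq> {0, 1}"
  shows "rho (witness_seq v e) (count_ones v + i) = prepend_seq e (\<lambda>_. 0) i"
proof -
  let ?S = "{k. witness_seq v e k = 1}" and ?s = "code_pos (length v) e i"
  have "{k. k < length v \<and> v ! k = 1} \<inter> code_pos (length v) e ` {..<i} = {}"
    by (auto simp: code_pos_def)
  moreover have "card (code_pos (length v) e ` {..<i}) = i"
    using strict_mono_imp_inj_on[OF strict_mono_code_pos] by (simp add: card_image)
  ultimately have "card {k\<in>?S. k < ?s} = count_ones v + i"
    unfolding Collect_conj_eq[symmetric] mem_Collect_eq ones_witness_seq_below_code_pos
    by (subst card_Un_disjoint) (auto simp: count_ones_eq_card)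
  then have "enumerate ?S (count_ones v + i) = ?s"
    using enumerate_card_less[OF infinite_ones_witness_seq, of ?s v e] witness_seq_code_pos by simp
  then have "rho (witness_seq v e) (count_ones v + i) = (if even ?s then 0 else 1)"
    unfolding rho_def by simp
  moreover have "prepend_seq e (\<lambda>_. 0) i \<le> 1"
    using assms unfolding prepend_seq_def by (auto dest: nth_mem)
  ultimately show ?thesis using even_code_pos[OF assms] by (auto simp: le_Suc_eq)
qed

lemma digit_val_rho_witness_seq:
  assumes "set e \<subseteq> {0, 1}"
  shows "digit_val (rho (witness_seq v e)) = rho_prefix_val v + word_val e / 2 ^ count_ones v"
proof -
  have "infinite {k. prepend_seq [0] (parity_code (length v) e) k = 1}"
    by (intro infinite_ones_prepend_seq infinite_ones_parity_code)
  then have "digit_val (rho (witness_seq v e)) = rho_prefix_val v +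
               digit_val (drop_seq (count_ones v) (rho (witness_seq v e))) / 2 ^ count_ones v"
    unfolding witness_seq_def by (rule digit_val_rho_prepend_seq)
  moreover have "drop_seq (count_ones v) (rho (witness_seq v e)) = prepend_seq e (\<lambda>_. 0)"
    unfolding drop_seq_def using rho_witness_seq[OF assms] by (auto simp: add.commute)
  moreover have "digit_val (prepend_seq e (\<lambda>_. 0)) = word_val e"
    using digit_val_prepend_seq[OF assms, of "\<lambda>_. 0"] by (simp add: binary_seq_def digit_val_def)
  ultimately show ?thesis by simp
qed

section \<open>Counting binary words\<close>

lemma finite_bin_words: "finite (bin_words n)"
  unfolding bin_words_def by (rule finite_lists_length_eq) simp

lemma card_bin_words: "card (bin_words n) = 2 ^ n"
  unfolding bin_words_def using card_lists_length_eq[of "{0::nat, 1}" n] by (simp add: numeral_2_eq_2)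

lemma bin_words_Suc: "bin_words (Suc n) = Cons 0 ` bin_words n \<union> Cons 1 ` bin_words n"
proof (intro set_eqI iffI)
  fix x assume "x \<in> bin_words (Suc n)"
  then obtain a u where "x = a # u" "a \<in> {0, 1}" "u \<in> bin_words n"
    unfolding bin_words_def by (cases x) auto
  then show "x \<in> Cons 0 ` bin_words n \<union> Cons 1 ` bin_words n" by auto
qed (auto simp: bin_words_def)

lemma count_ones_Cons: "count_ones (a # u) = (if a = 1 then 1 else 0) + count_ones u"
  unfolding count_ones_def by simp

lemma count_ones_le: "v \<in> bin_words n \<Longrightarrow> count_ones v \<le> n"
  unfolding bin_words_def using count_ones_le_length by auto

lemma sum_bin_words_pow2: "(\<Sum>v\<in>bin_words n. (2::nat) ^ (n - count_ones v)) = 3 ^ n"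
proof (induction n)
  case 0
  have "bin_words 0 = {[]}" unfolding bin_words_def by auto
  then show ?case by (simp add: count_ones_def)
next
  case (Suc n)
  let ?f = "\<lambda>m v. (2::nat) ^ (m - count_ones v)"
  have "(\<Sum>v\<in>bin_words (Suc n). ?f (Suc n) v) =
        (\<Sum>v\<in>Cons 0 ` bin_words n. ?f (Suc n) v) + (\<Sum>v\<in>Cons 1 ` bin_words n. ?f (Suc n) v)"
    unfolding bin_words_Suc by (rule sum.union_disjoint) (auto simp: finite_bin_words)
  also have "(\<Sum>v\<in>Cons 0 ` bin_words n. ?f (Suc n) v) = (\<Sum>u\<in>bin_words n. 2 * ?f n u)"
  proof (rule sum.reindex_cong[where l="Cons 0"])
    fix u assume "u \<in> bin_words n"
    then show "?f (Suc n) (0 # u) = 2 * ?f n u"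
      using count_ones_le[of u n] by (simp add: count_ones_Cons Suc_diff_le)
  qed auto
  also have "(\<Sum>v\<in>Cons 1 ` bin_words n. ?f (Suc n) v) = (\<Sum>u\<in>bin_words n. ?f n u)"
    by (rule sum.reindex_cong[where l="Cons 1"]) (auto simp: count_ones_Cons)
  finally show ?case using Suc.IH by (simp add: sum_distrib_left[symmetric])
qed

section \<open>Box-counting dimension\<close>

lemma box_count_le_card:
  assumes "finite F" "E \<subseteq> \<Union>F" "\<forall>U\<in>F. bounded U \<and> diameter U \<le> \<delta>"
  shows "box_count \<delta> E \<le> card F"
  unfolding box_count_def by (rule cInf_lower) (use assms in auto)

text \<open>No set of diameter at most \<open>\<delta>\<close> contains two points of a \<open>\<delta>\<close>-separated family.
  The finite cover \<open>G\<close> only excludes the junk value \<open>Inf {} = 0\<close>.\<close>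

lemma card_le_box_count:
  fixes E :: "'a::metric_space set"
  assumes "finite J" "p ` J \<subseteq> E" "\<And>a b. a \<in> J \<Longrightarrow> b \<in> J \<Longrightarrow> a \<noteq> b \<Longrightarrow> \<delta> < dist (p a) (p b)"
    and "finite G" "E \<subseteq> \<Union>G" "\<forall>U\<in>G. bounded U \<and> diameter U \<le> \<delta>"
  shows "card J \<le> box_count \<delta> E"
  unfolding box_count_def
proof (rule cInf_greatest)
  show "{card F |F. finite F \<and> E \<subseteq> \<Union>F \<and> (\<forall>U\<in>F. bounded U \<and> diameter U \<le> \<delta>)} \<noteq> {}"
    using assms(4-6) by blast
next
  fix k assume "k \<in> {card F |F. finite F \<and> E \<subseteq> \<Union>F \<and> (\<forall>U\<in>F. bounded U \<and> diameter U \<le> \<delta>)}"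
  then obtain F where F: "k = card F" "finite F" "E \<subseteq> \<Union>F" "\<forall>U\<in>F. bounded U \<and> diameter U \<le> \<delta>"
    by blast
  have "\<forall>a\<in>J. \<exists>U. U \<in> F \<and> p a \<in> U" using F(3) assms(2) by blast
  from bchoice[OF this] obtain g where g: "\<And>a. a \<in> J \<Longrightarrow> g a \<in> F \<and> p a \<in> g a" by blast
  have "inj_on g J"
  proof (rule inj_onI, rule ccontr)
    fix a b assume ab: "a \<in> J" "b \<in> J" "g a = g b" "a \<noteq> b"
    have "dist (p a) (p b) \<le> diameter (g a)"
      using g[OF ab(1)] g[OF ab(2)] ab(3) F(4) by (intro diameter_bounded_bound) auto
    also have "\<dots> \<le> \<delta>" using g[OF ab(1)] F(4) by auto
    finally show False using assms(3)[OF ab(1,2,4)] by simp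
  qed
  then have "card J \<le> card F" using g F(2) by (intro card_inj_on_le) auto
  then show "card J \<le> k" using F(1) by simp
qed

lemma ln_box_count_bounds:
  fixes E :: "'a::metric_space set"
  assumes "1 < a" "0 < c"
    and upper: "\<And>n \<delta>. 1 / 2 ^ n \<le> \<delta> \<Longrightarrow> real (box_count \<delta> E) \<le> c * a ^ n"
    and lower: "\<And>n \<delta>. 0 < \<delta> \<Longrightarrow> \<delta> < 1 / 2 ^ (n + 1) \<Longrightarrow> a ^ n \<le> real (box_count \<delta> E)"
    and \<delta>: "0 < \<delta>" "\<delta> < 1 / 4"
  defines "L \<equiv> - ln \<delta> / ln 2"
  shows "(L - 2) * ln a \<le> ln (box_count \<delta> E)" "ln (box_count \<delta> E) \<le> ln c + (L + 1) * ln a"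
proof -
  have ln_pow2: "ln (1 / 2 ^ m) = - real m * ln (2::real)" for m
    by (simp add: ln_div ln_realpow)
  have "ln \<delta> < ln (1 / 2 ^ 2)" using \<delta> by simp
  then have "2 < L" unfolding L_def ln_pow2 by (simp add: field_simps)
  define k where "k = nat \<lceil>L\<rceil>"
  have k: "L \<le> real k" "real k < L + 1" "2 \<le> k" unfolding k_def using \<open>2 < L\<close> by linarith+
  have "ln (1 / 2 ^ k) \<le> ln \<delta>"
    unfolding ln_pow2 using k(1) unfolding L_def by (simp add: field_simps)
  then have N_upper: "box_count \<delta> E \<le> c * a ^ k" using \<delta>(1) by (intro upper) simp
  have "ln \<delta> < ln (1 / 2 ^ (k - 2 + 1))"
    unfolding ln_pow2 using k unfolding L_def by (simp add: field_simps of_nat_diff)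
  then have N_lower: "a ^ (k - 2) \<le> box_count \<delta> E" using \<delta>(1) by (intro lower) simp_all
  moreover have "0 < a ^ (k - 2)" using assms(1) by simp
  ultimately have N_pos: "0 < real (box_count \<delta> E)" by linarith
  have "(L - 2) * ln a \<le> real (k - 2) * ln a"
    using k assms(1) by (intro mult_right_mono) (auto simp: of_nat_diff)
  also have "\<dots> = ln (a ^ (k - 2))" using assms(1) by (simp add: ln_realpow)
  also have "\<dots> \<le> ln (box_count \<delta> E)" using N_lower N_pos assms(1) by (subst ln_le_cancel_iff) auto
  finally show "(L - 2) * ln a \<le> ln (box_count \<delta> E)" .
  have "ln (box_count \<delta> E) \<le> ln (c * a ^ k)" using N_upper N_pos by simp
  also have "\<dots> = ln c + real k * ln a" using assms(1,2) by (simp add: ln_mult ln_realpow)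
  also have "\<dots> \<le> ln c + (L + 1) * ln a" using k assms(1) by (intro add_left_mono mult_right_mono) auto
  finally show "ln (box_count \<delta> E) \<le> ln c + (L + 1) * ln a" .
qed

lemma has_box_dim_of_dyadic_bounds:
  fixes E :: "'a::metric_space set"
  assumes "1 < a" "0 < c"
    and upper: "\<And>n \<delta>. 1 / 2 ^ n \<le> \<delta> \<Longrightarrow> real (box_count \<delta> E) \<le> c * a ^ n"
    and lower: "\<And>n \<delta>. 0 < \<delta> \<Longrightarrow> \<delta> < 1 / 2 ^ (n + 1) \<Longrightarrow> a ^ n \<le> real (box_count \<delta> E)"
  shows "has_box_dim E (log 2 a)"
  unfolding has_box_dim_def
proof (rule tendsto_sandwich[where f="\<lambda>\<delta>. log 2 a - 2 * ln a / - ln \<delta>"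
                                and h="\<lambda>\<delta>. log 2 a + (ln c + ln a) / - ln \<delta>"])
  have small: "\<forall>\<^sub>F \<delta> in at_right 0. 0 < \<delta> \<and> \<delta> < (1 / 4 :: real)"
    unfolding eventually_at_right_field by (intro exI[of _ "1/4"]) auto
  have bounds: "log 2 a - 2 * ln a / - ln \<delta> \<le> ln (box_count \<delta> E) / - ln \<delta> \<and>
        ln (box_count \<delta> E) / - ln \<delta> \<le> log 2 a + (ln c + ln a) / - ln \<delta>"
    if "0 < \<delta>" "\<delta> < 1 / 4" for \<delta>
  proof -
    define L where "L = - ln \<delta> / ln 2"
    have D: "0 < - ln \<delta>" using that by simp
    have "log 2 a - 2 * ln a / - ln \<delta> = (L - 2) * ln a / - ln \<delta>"
      using D unfolding L_def log_def by (simp add: field_simps)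
    also have "\<dots> \<le> ln (box_count \<delta> E) / - ln \<delta>"
      using ln_box_count_bounds(1)[OF assms that] D unfolding L_def by (intro divide_right_mono) auto
    finally have lower: "log 2 a - 2 * ln a / - ln \<delta> \<le> ln (box_count \<delta> E) / - ln \<delta>" .
    have "ln (box_count \<delta> E) / - ln \<delta> \<le> (ln c + (L + 1) * ln a) / - ln \<delta>"
      using ln_box_count_bounds(2)[OF assms that] D unfolding L_def by (intro divide_right_mono) auto
    also have "\<dots> = log 2 a + (ln c + ln a) / - ln \<delta>"
      using D unfolding L_def log_def by (simp add: field_simps)
    finally show ?thesis using lower by blast
  qed
  show "\<forall>\<^sub>F \<delta> in at_right 0. log 2 a - 2 * ln a / - ln \<delta> \<le> ln (box_count \<delta> E) / - ln \<delta>"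
    by (rule eventually_mono[OF small]) (use bounds in blast)
  show "\<forall>\<^sub>F \<delta> in at_right 0. ln (box_count \<delta> E) / - ln \<delta> \<le> log 2 a + (ln c + ln a) / - ln \<delta>"
    by (rule eventually_mono[OF small]) (use bounds in blast)
  have "filterlim (\<lambda>\<delta>. - ln \<delta>) at_top (at_right (0::real))"
    using ln_at_0 filterlim_uminus_at_top by fastforce
  then have "filterlim (\<lambda>\<delta>. - ln \<delta>) at_infinity (at_right (0::real))"
    by (rule filterlim_at_top_imp_at_infinity)
  then have "((\<lambda>\<delta>. d / - ln \<delta>) \<longlongrightarrow> 0) (at_right 0)" for d :: real
    by (rule tendsto_divide_0[OF tendsto_const])
  then show "((\<lambda>\<delta>. log 2 a - 2 * ln a / - ln \<delta>) \<longlongrightarrow> log 2 a) (at_right 0)"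
    and "((\<lambda>\<delta>. log 2 a + (ln c + ln a) / - ln \<delta>) \<longlongrightarrow> log 2 a) (at_right 0)"
    using tendsto_diff[OF tendsto_const] tendsto_add[OF tendsto_const] by fastforce+
qed

section \<open>Hausdorff dimension\<close>

lemma hcost_le_powr:
  assumes "0 < s" "bounded U" "diameter U \<le> h"
  shows "hcost s U \<le> h powr s"
proof (cases "U = {}")
  case False
  have "diameter U powr s \<le> h powr s"
    using assms diameter_ge_0[OF assms(2)] by (intro powr_mono2) auto
  then show ?thesis using False assms(1) unfolding hcost_def by simp
qed (use assms in \<open>simp add: hcost_def\<close>)

lemma hausdorff_pre_le_card:
  fixes E :: "'a::metric_space set"
  assumes "0 < s" "finite F" "E \<subseteq> \<Union>F" "\<forall>U\<in>F. bounded U \<and> diameter U \<le> h" "0 \<le> h" "h \<le> \<delta>"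
  shows "hausdorff_pre s \<delta> E \<le> ennreal (card F * h powr s)"
proof -
  obtain fs where fs: "set fs = F" "distinct fs" using finite_distinct_list[OF assms(2)] by blast
  define U where "U i = (if i < length fs then fs ! i else {})" for i
  have U_F: "U i \<in> F" if "i < length fs" for i using that fs(1) unfolding U_def by auto
  have U_bounds: "bounded (U i) \<and> diameter (U i) \<le> h" for i
    using U_F[of i] assms(4,5) by (cases "i < length fs") (auto simp: U_def)
  have "E \<subseteq> (\<Union>i. U i)"
  proof
    fix x assume "x \<in> E"
    then obtain V where "V \<in> set fs" "x \<in> V" using assms(3) fs(1) by blast
    then obtain i where "i < length fs" "fs ! i = V" by (metis in_set_conv_nth)
    then show "x \<in> (\<Union>i. U i)" using \<open>x \<in> V\<close> unfolding U_def by auto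
  qed
  moreover have "\<forall>i. bounded (U i) \<and> diameter (U i) \<le> \<delta>"
    using U_bounds assms(6) by (meson order_trans)
  ultimately have "hausdorff_pre s \<delta> E \<le> (\<Sum>i. ennreal (hcost s (U i)))"
    unfolding hausdorff_pre_def by (intro INF_lower) simp
  also have "(\<Sum>i. ennreal (hcost s (U i))) = (\<Sum>i<length fs. ennreal (hcost s (U i)))"
    by (rule suminf_finite) (auto simp: U_def hcost_def)
  also have "\<dots> = ennreal (\<Sum>i<length fs. hcost s (U i))"
    by (intro sum_ennreal) (auto simp: hcost_def)
  also have "\<dots> \<le> ennreal (\<Sum>i<length fs. h powr s)"
    using U_bounds assms(1) by (intro ennreal_leI sum_mono hcost_le_powr) auto
  also have "\<dots> = ennreal (card F * h powr s)"
    using distinct_card[OF fs(2)] fs(1) by simp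
  finally show ?thesis .
qed

text \<open>Covers by \<open>O(a^n)\<close> sets of diameter \<open>2^-n\<close> bound the \<open>s\<close>-dimensional Hausdorff
  premeasure by a multiple of \<open>(a / 2^s)^n\<close>, which tends to \<open>0\<close> as soon as \<open>s > log 2 a\<close>.\<close>

lemma hausdorff_measure_eq_0_of_dyadic_covers:
  fixes E :: "'a::metric_space set"
  assumes "1 \<le> a" "log 2 a < s"
    and covers: "\<And>n. \<exists>F. finite F \<and> E \<subseteq> \<Union>F \<and> real (card F) \<le> c * a ^ n \<and>
                          (\<forall>U\<in>F. bounded U \<and> diameter U \<le> 1 / 2 ^ n)"
  shows "hausdorff_measure s E = 0"
proof -
  have "0 \<le> log 2 a" "a = 2 powr log 2 a" using assms(1) by auto
  then have "0 < s" "a < 2 powr s" using assms(2) powr_less_mono[of "log 2 a" s 2] by auto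
  define q where "q = a / 2 powr s"
  have q: "0 < q" "q < 1" unfolding q_def using assms(1) \<open>a < 2 powr s\<close> by auto
  have powr_eq: "(1 / 2 ^ n) powr s = 1 / (2 powr s) ^ n" for n :: nat
  proof -
    have "((2::real) ^ n) powr s = (2 powr s) ^ n"
      by (simp add: powr_realpow[symmetric] powr_powr powr_power mult.commute)
    then show ?thesis by (simp add: powr_divide)
  qed
  have small: "hausdorff_pre s \<delta> E \<le> ennreal \<epsilon>" if "0 < \<delta>" "0 < \<epsilon>" for \<delta> \<epsilon>
  proof -
    have "(\<lambda>n. c * q ^ n) \<longlonglongrightarrow> 0" using q by (intro tendsto_mult_right_zero LIMSEQ_power_zero) simp
    from order_tendstoD(2)[OF this \<open>0 < \<epsilon>\<close>]
    obtain N1 where N1: "\<And>n. N1 \<le> n \<Longrightarrow> c * q ^ n < \<epsilon>"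
      unfolding eventually_sequentially by blast
    obtain N2 where N2: "\<And>n. N2 \<le> n \<Longrightarrow> (1 / 2) ^ n < \<delta>"
      using order_tendstoD(2)[OF LIMSEQ_power_zero[of "1/2::real"] \<open>0 < \<delta>\<close>]
      unfolding eventually_sequentially by auto
    define n where "n = max N1 N2"
    have n: "c * q ^ n < \<epsilon>" "1 / 2 ^ n \<le> \<delta>"
      using N1[of n] N2[of n] unfolding n_def by (auto simp: power_divide)
    obtain F where F: "finite F" "E \<subseteq> \<Union>F" "real (card F) \<le> c * a ^ n"
      "\<forall>U\<in>F. bounded U \<and> diameter U \<le> 1 / 2 ^ n"
      using covers by blast
    have "card F * (1 / 2 ^ n) powr s \<le> c * q ^ n"
      using F(3) unfolding powr_eq q_def by (simp add: power_divide divide_right_mono)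
    then have "hausdorff_pre s \<delta> E \<le> ennreal (c * q ^ n)"
      using hausdorff_pre_le_card[OF \<open>0 < s\<close> F(1,2,4) _ n(2)]
      by (auto intro: order_trans ennreal_leI)
    also have "\<dots> \<le> ennreal \<epsilon>" using n(1) by (intro ennreal_leI) simp
    finally show ?thesis .
  qed
  have "hausdorff_pre s \<delta> E = 0" if "0 < \<delta>" for \<delta>
  proof -
    have "hausdorff_pre s \<delta> E \<le> 0"
    proof (rule ennreal_le_epsilon)
      fix \<epsilon> :: real assume "0 < \<epsilon>"
      then show "hausdorff_pre s \<delta> E \<le> 0 + ennreal \<epsilon>" using small[OF that] by simp
    qed
    then show ?thesis by simp
  qed
  then show ?thesis unfolding hausdorff_measure_def by simp
qed

lemma diameter_le_hcost:
  assumes "0 \<le> s" "s < 1" "bounded U" "diameter U \<le> 1"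
  shows "diameter U \<le> hcost s U"
proof (cases "U = {} \<or> s = 0")
  case False
  have "diameter U powr 1 \<le> diameter U powr s"
    using assms diameter_ge_0[OF assms(3)] by (intro powr_mono') auto
  then show ?thesis using False diameter_ge_0[OF assms(3)] unfolding hcost_def by auto
qed (use assms in \<open>auto simp: hcost_def\<close>)

text \<open>Projecting to the first coordinate does not increase diameters, so an \<open>s\<close>-cover of
  \<open>E\<close> with \<open>s < 1\<close> yields intervals covering \<open>[0, 1]\<close> of total length at most twice its
  cost.\<close>

lemma hausdorff_measure_nonzero_if_fst_covers:
  fixes E :: "(real \<times> 'a::metric_space) set"
  assumes "{0..1} \<subseteq> fst ` E" "0 \<le> s" "s < 1"
  shows "hausdorff_measure s E \<noteq> 0"
proof -
  have "ennreal (1 / 2) \<le> (\<Sum>i. ennreal (hcost s (U i)))"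
    if cover: "E \<subseteq> (\<Union>i. U i)" "\<forall>i. bounded (U i) \<and> diameter (U i) \<le> 1" for U
  proof -
    define d where "d i = diameter (U i)" for i
    define c where "c i = fst (SOME p. p \<in> U i)" for i
    define I where "I i = (if U i = {} then {} else {c i - d i .. c i + d i})" for i
    have d0: "0 \<le> d i" for i unfolding d_def using cover(2) diameter_ge_0 by blast
    have "{0..1::real} \<subseteq> (\<Union>i. I i)"
    proof
      fix x :: real assume "x \<in> {0..1}"
      then obtain p i where p: "p \<in> U i" "fst p = x" using assms(1) cover(1) by force
      have some: "(SOME p. p \<in> U i) \<in> U i" using p(1) by (rule someI)
      have "dist x (c i) \<le> dist p (SOME p. p \<in> U i)"
        unfolding c_def p(2)[symmetric] by (rule dist_fst_le)
      also have "\<dots> \<le> d i" unfolding d_def using cover(2) p some by (intro diameter_bounded_bound) auto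
      finally show "x \<in> (\<Union>i. I i)" using p unfolding I_def by (auto simp: dist_real_def)
    qed
    then have "emeasure lborel {0..1::real} \<le> emeasure lborel (\<Union>i. I i)"
      by (rule emeasure_mono) (auto simp: I_def)
    also have "\<dots> \<le> (\<Sum>i. emeasure lborel (I i))"
      by (rule emeasure_subadditive_countably) (auto simp: I_def)
    also have "\<dots> \<le> (\<Sum>i. 2 * ennreal (d i))"
      using d0 by (intro suminf_le) (auto simp: I_def ennreal_mult)
    also have "\<dots> = 2 * (\<Sum>i. ennreal (d i))" by (rule ennreal_suminf_cmult)
    also have "\<dots> \<le> 2 * (\<Sum>i. ennreal (hcost s (U i)))"
      unfolding d_def using cover(2) assms(2,3)
      by (intro mult_left_mono suminf_le ennreal_leI diameter_le_hcost) auto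
    finally have "1 \<le> 2 * (\<Sum>i. ennreal (hcost s (U i)))" by simp
    then have "ennreal (1 / 2) * 1 \<le> ennreal (1 / 2) * (2 * (\<Sum>i. ennreal (hcost s (U i))))"
      by (rule mult_left_mono) simp
    moreover have "ennreal (1 / 2) * 2 = 1" using ennreal_mult[of "1 / 2" 2, symmetric] by simp
    ultimately show ?thesis by (simp add: mult.assoc[symmetric])
  qed
  then have "ennreal (1 / 2) \<le> hausdorff_pre s 1 E"
    unfolding hausdorff_pre_def by (auto intro!: INF_greatest)
  also have "\<dots> \<le> hausdorff_measure s E"
    unfolding hausdorff_measure_def by (intro SUP_upper) auto
  finally show ?thesis by auto
qed

lemma hausdorff_dim_le:
  assumes "0 \<le> d" "\<And>s. d < s \<Longrightarrow> hausdorff_measure s E = 0"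
  shows "hausdorff_dim E \<le> d"
  unfolding hausdorff_dim_def
proof (rule field_le_epsilon)
  fix \<epsilon> :: real assume "0 < \<epsilon>"
  then show "Inf {s. 0 \<le> s \<and> hausdorff_measure s E = 0} \<le> d + \<epsilon>"
    using assms by (intro cInf_lower) (auto intro: bdd_belowI[of _ 0])
qed

lemma hausdorff_dim_ge:
  assumes "\<And>s. 0 \<le> s \<Longrightarrow> s < d \<Longrightarrow> hausdorff_measure s E \<noteq> 0"
    and "0 \<le> t" "hausdorff_measure t E = 0"
  shows "d \<le> hausdorff_dim E"
  unfolding hausdorff_dim_def
  by (rule cInf_greatest) (use assms in \<open>auto simp: not_less[symmetric]\<close>)

section \<open>Covering and packing the graph of \<open>R\<close>\<close>

lemma take_binary_seq_in_bin_words: "binary_seq b \<Longrightarrow> map b [0..<n] \<in> bin_words n"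
  unfolding bin_words_def binary_seq_def by (simp add: image_subset_iff)

lemma digit_val_R_cylinder:
  fixes b :: "nat \<Rightarrow> nat" and n :: nat
  assumes "binary_seq b" "infinite {k. b k = 1}"
  defines "v \<equiv> map b [0..<n]"
  obtains s t where "0 \<le> s" "s \<le> 1" "digit_val b = word_val v + s / 2 ^ n"
    and "0 \<le> t" "t \<le> 1" "R (digit_val b) = rho_prefix_val v + t / 2 ^ count_ones v"
proof -
  let ?s = "digit_val (drop_seq n b)" and ?t = "digit_val (drop_seq (count_ones v) (rho b))"
  have b_eq: "b = prepend_seq v (drop_seq n b)"
    unfolding v_def by (rule prepend_seq_take_drop[symmetric])
  have "set v \<subseteq> {0, 1}"
    using take_binary_seq_in_bin_words[OF assms(1)] unfolding v_def bin_words_def by blast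
  then have "digit_val b = word_val v + ?s / 2 ^ n"
    using digit_val_prepend_seq[OF _ binary_seq_drop_seq[OF assms(1)], of v n] b_eq
    by (simp add: v_def)
  moreover have "R (digit_val b) = rho_prefix_val v + ?t / 2 ^ count_ones v"
    using R_digit_val[OF assms(1,2)] digit_val_rho_prepend_seq[OF infinite_ones_drop_seq[OF assms(2)], of v n]
    by (simp flip: b_eq)
  ultimately show thesis
    using that[of ?s ?t] assms(1) binary_seq_drop_seq binary_seq_rho digit_val_nonneg digit_val_le_1
    by blast
qed

text \<open>On the cylinder of a word \<open>v\<close> of length \<open>n\<close> the graph lies in a column of width
  \<open>2^-n\<close> and height \<open>2^-count_ones v\<close>, i.e. in \<open>2^(n - count_ones v) + 1\<close> boxes of side
  \<open>2^-n\<close>; by \<open>sum_bin_words_pow2\<close> these are \<open>O(3^n)\<close> boxes in total.\<close>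

definition graph_box :: "nat \<Rightarrow> nat list \<Rightarrow> nat \<Rightarrow> (real \<times> real) set" where
  "graph_box n v i = {word_val v .. word_val v + 1 / 2 ^ n} \<times>
                     {rho_prefix_val v + i / 2 ^ n .. rho_prefix_val v + (i + 1) / 2 ^ n}"

definition box_index :: "nat \<Rightarrow> (nat list \<times> nat) set" where
  "box_index n = (SIGMA v:bin_words n. {..2 ^ (n - count_ones v)})"

definition graph_boxes :: "nat \<Rightarrow> (real \<times> real) set set" where
  "graph_boxes n = (\<lambda>(v, i). graph_box n v i) ` box_index n \<union> {{(0, 2 / 3)}}"

lemma finite_box_index: "finite (box_index n)"
  unfolding box_index_def using finite_bin_words by auto

lemma card_box_index: "card (box_index n) = 3 ^ n + 2 ^ n"
proof -
  have "card (box_index n) = (\<Sum>v\<in>bin_words n. 2 ^ (n - count_ones v) + 1)"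
    unfolding box_index_def using finite_bin_words by (subst card_SigmaI) auto
  also have "\<dots> = (\<Sum>v\<in>bin_words n. 2 ^ (n - count_ones v)) + (\<Sum>v\<in>bin_words n. 1)"
    by (rule sum.distrib)
  also have "\<dots> = 3 ^ n + 2 ^ n" by (simp add: sum_bin_words_pow2 card_bin_words)
  finally show ?thesis .
qed

lemma finite_graph_boxes: "finite (graph_boxes n)"
  unfolding graph_boxes_def using finite_box_index by auto

lemma card_graph_boxes: "card (graph_boxes n) \<le> 3 ^ (n + 1)"
proof -
  have "card (graph_boxes n) \<le> card (box_index n) + 1"
    unfolding graph_boxes_def using card_image_le[OF finite_box_index]
    by (intro order_trans[OF card_Un_le]) auto
  also have "\<dots> \<le> 3 ^ n + 3 ^ n + 3 ^ n"
  proof -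
    have "(2::nat) ^ n \<le> 3 ^ n" "1 \<le> (3::nat) ^ n" by (simp_all add: power_mono)
    then show ?thesis unfolding card_box_index by linarith
  qed
  finally show ?thesis by simp
qed

lemma diameter_square_le:
  assumes "0 \<le> h" shows "diameter ({a..a + h} \<times> {c..c + h}) \<le> 2 * (h::real)"
proof (rule diameter_le)
  fix p q assume "p \<in> {a..a + h} \<times> {c..c + h}" "q \<in> {a..a + h} \<times> {c..c + h}"
  then have "\<bar>fst p - fst q\<bar> \<le> h" "\<bar>snd p - snd q\<bar> \<le> h" by auto
  then show "norm (p - q) \<le> 2 * h"
    using sqrt_sum_squares_le_sum_abs[of "fst p - fst q" "snd p - snd q"]
    by (simp add: norm_Pair norm_prod_def)
qed (use assms in simp)

lemma graph_boxes_diameter: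
  assumes "U \<in> graph_boxes n" shows "bounded U" "diameter U \<le> 2 / 2 ^ n"
proof -
  have "bounded U \<and> diameter U \<le> 2 / 2 ^ n"
  proof (cases "U = {(0, 2 / 3)}")
    case False
    then obtain v i where "U = graph_box n v i" using assms unfolding graph_boxes_def by auto
    then have U: "U = {word_val v .. word_val v + 1 / 2 ^ n} \<times>
                       {rho_prefix_val v + i / 2 ^ n .. (rho_prefix_val v + i / 2 ^ n) + 1 / 2 ^ n}"
      unfolding graph_box_def by (simp add: add_divide_distrib add.assoc)
    show ?thesis
      using diameter_square_le[of "1 / 2 ^ n"] unfolding U by (simp add: bounded_Times)
  qed simp
  then show "bounded U" "diameter U \<le> 2 / 2 ^ n" by auto
qed

lemma closed_graph_boxes: "U \<in> graph_boxes n \<Longrightarrow> closed U"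
  unfolding graph_boxes_def graph_box_def by (auto intro!: closed_Times)

lemma graphR_subset_graph_boxes: "graphR \<subseteq> \<Union>(graph_boxes n)"
proof
  fix p assume "p \<in> graphR"
  then obtain x where p: "p = (x, R x)" "0 \<le> x" "x \<le> 1" unfolding graphR_def by auto
  show "p \<in> \<Union>(graph_boxes n)"
  proof (cases "x = 0")
    case True
    then show ?thesis using p unfolding graph_boxes_def R_def by simp
  next
    case False
    then have "0 < x" using p(2) by simp
    then obtain b where b: "binary_seq b" "infinite {k. b k = 1}" "digit_val b = x"
      using ex_binary_seq_digit_val p(3) by blast
    define v where "v = map b [0..<n]"
    obtain s t where st: "0 \<le> s" "s \<le> 1" "x = word_val v + s / 2 ^ n"
      "0 \<le> t" "t \<le> 1" "R x = rho_prefix_val v + t / 2 ^ count_ones v"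
      by (rule digit_val_R_cylinder[OF b(1,2), of n, folded v_def, unfolded b(3)])
    have v: "v \<in> bin_words n" unfolding v_def by (rule take_binary_seq_in_bin_words[OF b(1)])
    define z where "z = t * 2 ^ (n - count_ones v)"
    have R_x: "R x = rho_prefix_val v + z / 2 ^ n"
      using count_ones_le[OF v] unfolding st(6) z_def by (simp add: power_diff)
    have z: "0 \<le> z" "z \<le> 2 ^ (n - count_ones v)"
      unfolding z_def using st(4) mult_right_mono[OF st(5), of "2 ^ (n - count_ones v)"] by auto
    define i where "i = nat \<lfloor>z\<rfloor>"
    have "real i = \<lfloor>z\<rfloor>" unfolding i_def using z(1) by simp
    then have i: "real i \<le> z" "z \<le> real i + 1" by linarith+
    then have "real i \<le> 2 ^ (n - count_ones v)" using z(2) by linarith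
    then have "(v, i) \<in> box_index n" unfolding box_index_def using v by simp
    moreover have "x \<in> {word_val v .. word_val v + 1 / 2 ^ n}"
      unfolding st(3) using st(1,2) by (simp add: divide_right_mono)
    moreover have "R x \<in> {rho_prefix_val v + i / 2 ^ n .. rho_prefix_val v + (i + 1) / 2 ^ n}"
      unfolding R_x using i by (simp add: divide_right_mono)
    ultimately have "(v, i) \<in> box_index n" "p \<in> graph_box n v i"
      unfolding graph_box_def p(1) by (auto simp: ac_simps)
    then show ?thesis unfolding graph_boxes_def by auto
  qed
qed

lemma closure_graphR_subset_graph_boxes: "closure graphR \<subseteq> \<Union>(graph_boxes n)"
  by (rule closure_minimal[OF graphR_subset_graph_boxes])
     (use finite_graph_boxes closed_graph_boxes in auto)

lemma closure_graphR_dyadic_cover: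
  "\<exists>F. finite F \<and> closure graphR \<subseteq> \<Union>F \<and> real (card F) \<le> 9 * 3 ^ n \<and>
       (\<forall>U\<in>F. bounded U \<and> diameter U \<le> 1 / 2 ^ n)"
proof -
  have "real (card (graph_boxes (n + 1))) \<le> 9 * 3 ^ n"
    using of_nat_mono[OF card_graph_boxes[of "n + 1"]] by simp
  moreover have "bounded U \<and> diameter U \<le> 1 / 2 ^ n" if "U \<in> graph_boxes (n + 1)" for U
    using graph_boxes_diameter[OF that] by simp
  ultimately show ?thesis
    using finite_graph_boxes[of "n + 1"] closure_graphR_subset_graph_boxes[of "n + 1"]
    by (intro exI[of _ "graph_boxes (n + 1)"]) blast
qed

text \<open>Dually, the \<open>3^n\<close> witnesses for the pairs \<open>(v, e)\<close> with \<open>v\<close> of length \<open>n\<close> and \<open>e\<close> of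
  length \<open>n - count_ones v\<close> are \<open>2^-(n+1)\<close>-separated points of the graph: different \<open>v\<close>
  separate the \<open>x\<close>-coordinates, different \<open>e\<close> the values of \<open>R\<close>.\<close>

definition witness_index :: "nat \<Rightarrow> (nat list \<times> nat list) set" where
  "witness_index n = (SIGMA v:bin_words n. bin_words (n - count_ones v))"

definition witness_point :: "nat list \<times> nat list \<Rightarrow> real \<times> real" where
  "witness_point a = (digit_val (witness_seq (fst a) (snd a)),
                      digit_val (rho (witness_seq (fst a) (snd a))))"

lemma finite_witness_index: "finite (witness_index n)"
  unfolding witness_index_def using finite_bin_words by auto

lemma card_witness_index: "card (witness_index n) = 3 ^ n"
  unfolding witness_index_def using finite_bin_words
  by (subst card_SigmaI) (auto simp: card_bin_words sum_bin_words_pow2)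

lemma witness_point_in_graphR: "a \<in> witness_index n \<Longrightarrow> witness_point a \<in> graphR"
  unfolding graphR_def witness_point_def witness_index_def bin_words_def
  using R_digit_val[OF binary_seq_witness_seq infinite_ones_witness_seq]
        digit_val_nonneg[OF binary_seq_witness_seq] digit_val_le_1[OF binary_seq_witness_seq]
  by auto

lemma witness_point_dist:
  assumes "a \<in> witness_index n" "b \<in> witness_index n" "a \<noteq> b"
  shows "1 / 2 ^ (n + 1) \<le> dist (witness_point a) (witness_point b)"
proof -
  obtain v e v' e' where ab: "a = (v, e)" "b = (v', e')"
    and v: "set v \<subseteq> {0, 1}" "length v = n" "set v' \<subseteq> {0, 1}" "length v' = n"
    and e: "set e \<subseteq> {0, 1}" "length e = n - count_ones v" "set e' \<subseteq> {0, 1}" "length e' = n - count_ones v'"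
    using assms(1,2) unfolding witness_index_def bin_words_def by auto
  show ?thesis
  proof (cases "v = v'")
    case False
    have "1 / 2 ^ n \<le> \<bar>word_val v - word_val v'\<bar>" using word_val_dist_ge[OF v(1,3)] v False by simp
    then have "1 / 2 ^ (n + 1) \<le> \<bar>digit_val (witness_seq v e) - digit_val (witness_seq v' e')\<bar>"
      using digit_val_witness_seq[OF v(1), of e] digit_val_witness_seq[OF v(3), of e'] v by simp
    also have "\<dots> \<le> dist (witness_point a) (witness_point b)"
      using dist_fst_le[of "witness_point a" "witness_point b"]
      unfolding witness_point_def ab by (simp add: dist_real_def)
    finally show ?thesis .
  next
    case True
    then have "e \<noteq> e'" using assms(3) ab by simp
    then have "1 / 2 ^ (n - count_ones v) \<le> \<bar>word_val e - word_val e'\<bar>"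
      using word_val_dist_ge[OF e(1,3)] e True by simp
    then have "1 / 2 ^ n \<le> \<bar>word_val e - word_val e'\<bar> / 2 ^ count_ones v"
      using count_ones_le_length[of v] v by (simp add: power_diff field_simps)
    also have "\<dots> = \<bar>digit_val (rho (witness_seq v e)) - digit_val (rho (witness_seq v' e'))\<bar>"
      using digit_val_rho_witness_seq[OF e(1), of v] digit_val_rho_witness_seq[OF e(3), of v] True
      by (simp flip: diff_divide_distrib)
    also have "\<dots> \<le> dist (witness_point a) (witness_point b)"
      using dist_snd_le[of "witness_point a" "witness_point b"]
      unfolding witness_point_def ab by (simp add: dist_real_def)
    finally show ?thesis by (simp add: field_simps)
  qed
qed

lemma has_box_dim_between_graphR_closure:
  assumes "graphR \<subseteq> E" "E \<subseteq> closure graphR"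
  shows "has_box_dim E (log 2 3)"
proof (rule has_box_dim_of_dyadic_bounds[where c=9])
  have cover: "\<exists>F. finite F \<and> E \<subseteq> \<Union>F \<and> real (card F) \<le> 9 * 3 ^ n \<and>
                   (\<forall>U\<in>F. bounded U \<and> diameter U \<le> 1 / 2 ^ n)" for n
  proof -
    obtain F where "finite F" "closure graphR \<subseteq> \<Union>F" "real (card F) \<le> 9 * 3 ^ n"
      "\<forall>U\<in>F. bounded U \<and> diameter U \<le> 1 / 2 ^ n"
      using closure_graphR_dyadic_cover by blast
    then show ?thesis using assms(2) by (intro exI[of _ F]) blast
  qed
  fix n :: nat and \<delta> :: real
  show "real (box_count \<delta> E) \<le> 9 * 3 ^ n" if "1 / 2 ^ n \<le> \<delta>"
  proof -
    obtain F where F: "finite F" "E \<subseteq> \<Union>F" "real (card F) \<le> 9 * 3 ^ n"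
      "\<forall>U\<in>F. bounded U \<and> diameter U \<le> 1 / 2 ^ n"
      using cover by blast
    have "\<forall>U\<in>F. bounded U \<and> diameter U \<le> \<delta>" using F(4) that by auto
    then have "box_count \<delta> E \<le> card F" by (rule box_count_le_card[OF F(1,2)])
    then show ?thesis using F(3) by linarith
  qed
  show "3 ^ n \<le> real (box_count \<delta> E)" if \<delta>: "0 < \<delta>" "\<delta> < 1 / 2 ^ (n + 1)"
  proof -
    obtain m where "(1 / 2) ^ m < \<delta>" using real_arch_pow_inv[of \<delta> "1/2::real"] \<delta>(1) by auto
    then have "1 / 2 ^ m \<le> \<delta>" by (simp add: power_divide)
    obtain G where G: "finite G" "E \<subseteq> \<Union>G" "\<forall>U\<in>G. bounded U \<and> diameter U \<le> 1 / 2 ^ m"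
      using cover by blast
    have "\<forall>U\<in>G. bounded U \<and> diameter U \<le> \<delta>" using G(3) \<open>1 / 2 ^ m \<le> \<delta>\<close> by auto
    moreover have "witness_point ` witness_index n \<subseteq> E" using witness_point_in_graphR assms(1) by blast
    moreover have "\<delta> < dist (witness_point a) (witness_point b)"
      if "a \<in> witness_index n" "b \<in> witness_index n" "a \<noteq> b" for a b
      using witness_point_dist[OF that] \<delta>(2) by linarith
    ultimately have "card (witness_index n) \<le> box_count \<delta> E"
      by (intro card_le_box_count[OF finite_witness_index _ _ G(1,2)])
    then show ?thesis unfolding card_witness_index by simp
  qed
qed simp_all

theorem proposition4p5:
  shows "1 \<le> hausdorff_dim graphR \<and> hausdorff_dim graphR \<le> log 2 3 \<and>
         has_box_dim graphR (log 2 3) \<and> has_box_dim (closure graphR) (log 2 3)"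
proof -
  have cover: "\<exists>F. finite F \<and> graphR \<subseteq> \<Union>F \<and> real (card F) \<le> 9 * 3 ^ n \<and>
                   (\<forall>U\<in>F. bounded U \<and> diameter U \<le> 1 / 2 ^ n)" for n
    using closure_graphR_dyadic_cover[of n] closure_subset[of graphR] by (meson subset_trans)
  have null: "hausdorff_measure s graphR = 0" if "log 2 3 < s" for s
    by (rule hausdorff_measure_eq_0_of_dyadic_covers[OF _ that cover]) simp
  have "{0..1} \<subseteq> fst ` graphR" unfolding graphR_def by force
  then have "hausdorff_measure s graphR \<noteq> 0" if "0 \<le> s" "s < 1" for s
    using hausdorff_measure_nonzero_if_fst_covers that by blast
  moreover have "log 2 3 < (2::real)" by (simp add: log_less_iff)
  ultimately have "1 \<le> hausdorff_dim graphR"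
    using null by (intro hausdorff_dim_ge[where t=2]) auto
  moreover have "hausdorff_dim graphR \<le> log 2 3"
    using null by (intro hausdorff_dim_le) auto
  moreover have "has_box_dim graphR (log 2 3)" "has_box_dim (closure graphR) (log 2 3)"
    using has_box_dim_between_graphR_closure closure_subset by auto
  ultimately show ?thesis by blast
qed

end
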